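(* Let $x=(p_1,\dots,p_N)\in\mathbb R^{N\times 3}$ be a point cloud and $\|x\|_2=(\sum_i\|p_i\|_2^2)^{1/2}$. Let $\sigma>0$, let $\epsilon\in\mathbb R^{N\times3}$ have i.i.d. $\mathcal N(0,\sigma^2)$ entries, and $q(y\mid x';\epsilon)=\mathbb E_\epsilon[P(y\mid x'+\epsilon)]$ for a base classifier $P$. Let $0<R\le\pi$, $\eta\ge0$, $\delta\ge0$ with $\frac{\delta^2}{4}+\frac{\eta^2R^2}{8}\le 1$. Let $z_j=(k_j,\theta_j)$, $j=1,\dots,M$, with $k_j\in S^2$, $\theta_j\in[0,R]$, such that for every $k\in S^2$ and $\theta\in[0,R]$ there is a $j$ with $\angle(k,k_j)\le\eta$ and $|\theta-\theta_j|\le\delta$. Suppose $y_A\in\mathcal Y$ and $p_A^{(j)},p_B^{(j)}\in(0,1)$ satisfy for all $j$ $$q(y_A\mid\phi_R(x,z_j);\epsilon)\ge p_A^{(j)}>p_B^{(j)}\ge\max_{y\ne y_A}q(y\mid\phi_R(x,z_j);\epsilon)$$ and $$\frac{\sigma}{2}\Big(\Phi^{-1}(p_A^{(j)})-\Phi^{-1}(p_B^{(j)})\Big)>\pi\sqrt{\frac{\delta^2}{4}+\frac{\eta^2R^2}{8}}\;\|x\|_2 .$$ Then for every $k\in S^2$, $\theta\in[0,R]$ and $y\ne y_A$: $q(y_A\mid\phi_R(x,(k,\theta));\epsilon)>q(y\mid\phi_R(x,(k,\theta));\epsilon)$.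
   Context: The general rotation with parameter $(k,\theta)\in S^2\times\mathbb R_{\ge0}$ acts pointwise by $\phi_R(p_i,(k,\theta))=Rot(k,\theta)p_i$, where $Rot(k,\theta)\in SO(3)$ is the rotation by angle $\theta$ about the unit axis $k$. $\angle(k,k_j)\in[0,\pi]$ denotes the angle between unit vectors $k,k_j$. Labels $\mathcal Y=\{1,\dots,C\}$; a base classifier is a measurable map $x\mapsto P(\cdot\mid x)$ to probability vectors on $\mathcal Y$. $\Phi$ is the standard normal CDF. *)

theory Defs
  imports "HOL-Analysis.Analysis" "HOL-Probability.Probability"
begin

text \<open>Rotation by angle theta about unit axis k (Rodrigues' formula), as a 3x3 matrix.\<close>
definition Rot :: "real^3 \<Rightarrow> real \<Rightarrow> real^3^3" where
  "Rot k \<theta> = matrix (\<lambda>p. cos \<theta> *\<^sub>R p + sin \<theta> *\<^sub>R cross3 k p + ((1 - cos \<theta>) * (k \<bullet> p)) *\<^sub>R k)"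

text \<open>Point clouds of N points: real^3^'n with N = CARD('n). General rotation acting pointwise.\<close>
definition phi_R :: "real^3^'n \<Rightarrow> real^3 \<Rightarrow> real \<Rightarrow> real^3^'n" where
  "phi_R x k \<theta> = (\<chi> i. Rot k \<theta> *v (x $ i))"

definition vangle :: "real^3 \<Rightarrow> real^3 \<Rightarrow> real" where
  "vangle k k' = arccos (k \<bullet> k')"

definition gauss_noise :: "real \<Rightarrow> (real^3^'n) measure" where
  "gauss_noise \<sigma> = density lborel (\<lambda>e. ennreal (\<Prod>i\<in>UNIV. \<Prod>c\<in>UNIV. normal_density 0 \<sigma> (e $ i $ c)))"

definition smoothed :: "(real^3^'n \<Rightarrow> nat \<Rightarrow> real) \<Rightarrow> real \<Rightarrow> real^3^'n \<Rightarrow> nat \<Rightarrow> real" where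
  "smoothed P \<sigma> x' y = (\<integral>e. P (x' + e) y \<partial>gauss_noise \<sigma>)"

definition Phi :: "real \<Rightarrow> real" where
  "Phi t = measure (density lborel std_normal_density) {..t}"

definition Phi_inv :: "real \<Rightarrow> real" where
  "Phi_inv p = (THE t. Phi t = p)"

definition base_classifier :: "nat \<Rightarrow> (real^3^'n \<Rightarrow> nat \<Rightarrow> real) \<Rightarrow> bool" where
  "base_classifier C P \<longleftrightarrow>
     (\<forall>y. (\<lambda>x. P x y) \<in> borel_measurable borel) \<and>
     (\<forall>x. (\<forall>y. 0 \<le> P x y) \<and> (\<forall>y. y \<notin> {1..C} \<longrightarrow> P x y = 0) \<and> (\<Sum>y\<in>{1..C}. P x y) = 1)"

end

theory Submission
  imports Defs
begin

text \<open>Shifting the isotropic Gaussian by \<open>w\<close> multiplies its density by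
  \<open>exp (e \<bullet> w / \<sigma>\<^sup>2 - \<parallel>w\<parallel>\<^sup>2 / (2\<sigma>\<^sup>2))\<close>, which is monotone in \<open>e \<bullet> w\<close>. By the
  Neyman--Pearson argument, among \<open>[0,1]\<close>-valued functions with a given Gaussian mean the
  half-spaces orthogonal to \<open>w\<close> lose (resp.\ gain) the most mean under the shift, and the
  half-space means are values of \<open>\<Phi>\<close>. Hence a smoothed classifier with class probabilities
  \<open>\<ge> \<Phi> a\<close> and \<open>\<le> \<Phi> b\<close> at \<open>x\<close> keeps its decision at \<open>x + w\<close> whenever
  \<open>\<parallel>w\<parallel> < \<sigma> (a - b) / 2\<close>.

  It remains to bound the displacement of the rotated point cloud from the nearest grid
  rotation. Writing rotations as conjugation \<open>p \<mapsto> q p q\<^sup>*\<close> by unit quaternions, the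
  displacement of a point \<open>p\<close> is at most \<open>2 \<parallel>q - q\<^sub>j\<parallel> \<parallel>p\<parallel>\<close>, and
  \<open>4 \<parallel>q - q\<^sub>j\<parallel>\<^sup>2 \<le> \<delta>\<^sup>2 + \<eta>\<^sup>2 R\<^sup>2 \<le> \<pi>\<^sup>2 (\<delta>\<^sup>2/4 + \<eta>\<^sup>2 R\<^sup>2/8)\<close>.\<close>

section \<open>Isotropic Gaussian measure\<close>

definition gaussian_density :: "real \<Rightarrow> 'a::euclidean_space \<Rightarrow> real" where
  "gaussian_density \<sigma> e = (\<Prod>b\<in>Basis. normal_density 0 \<sigma> (e \<bullet> b))"

definition gaussian_measure :: "real \<Rightarrow> 'a::euclidean_space measure" where
  "gaussian_measure \<sigma> = density lborel (\<lambda>e. ennreal (gaussian_density \<sigma> e))"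

lemma gaussian_density_nonneg: "0 \<le> gaussian_density \<sigma> e"
  unfolding gaussian_density_def by (intro prod_nonneg) auto

lemma borel_measurable_gaussian_density[measurable]: "gaussian_density \<sigma> \<in> borel_measurable borel"
  unfolding gaussian_density_def by measurable

lemma sets_gaussian_measure[simp, measurable_cong]: "sets (gaussian_measure \<sigma>) = sets borel"
  by (simp add: gaussian_measure_def)

lemma space_gaussian_measure[simp]: "space (gaussian_measure \<sigma>) = UNIV"
  by (simp add: gaussian_measure_def)

lemma indicator_PiE_eq_prod:
  assumes "finite I" "f \<in> extensional I"
  shows "indicator (Pi\<^sub>E I A) f = (\<Prod>i\<in>I. indicator (A i) (f i) :: 'b::comm_semiring_1)"
proof (cases "\<forall>i\<in>I. f i \<in> A i")
  case True
  with assms show ?thesis by (simp add: PiE_def)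
next
  case False
  then obtain i where "i \<in> I" "f i \<notin> A i" by blast
  moreover have "(\<Prod>i\<in>I. indicator (A i) (f i) :: 'b) = 0"
    using assms(1) \<open>i \<in> I\<close> \<open>f i \<notin> A i\<close> by (intro prod_zero bexI[of _ i]) auto
  moreover have "f \<notin> Pi\<^sub>E I A"
    using \<open>i \<in> I\<close> \<open>f i \<notin> A i\<close> by auto
  ultimately show ?thesis by simp
qed

lemma density_PiM_lborel_prod:
  fixes I :: "'i set" and g :: "real \<Rightarrow> real"
  assumes "finite I" and [measurable]: "g \<in> borel_measurable borel"
    and "prob_space (density lborel g)"
  shows "density (\<Pi>\<^sub>M i\<in>I. lborel) (\<lambda>f. \<Prod>i\<in>I. ennreal (g (f i))) = (\<Pi>\<^sub>M i\<in>I. density lborel g)"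
proof -
  interpret N: product_sigma_finite "\<lambda>_::'i. density lborel g"
    unfolding product_sigma_finite_def using assms(3) prob_space_imp_sigma_finite by blast
  interpret L: product_sigma_finite "\<lambda>_::'i. lborel :: real measure"
    by unfold_locales
  show ?thesis
  proof (rule N.PiM_eqI)
    show "sets (density (\<Pi>\<^sub>M i\<in>I. lborel) (\<lambda>f. \<Prod>i\<in>I. ennreal (g (f i)))) = sets (\<Pi>\<^sub>M i\<in>I. density lborel g)"
      by (simp only: sets_density) (rule sets_PiM_cong; simp)
  next
    fix A assume A: "\<And>i. i \<in> I \<Longrightarrow> A i \<in> sets (density lborel g)"
    have "emeasure (density (\<Pi>\<^sub>M i\<in>I. lborel) (\<lambda>f. \<Prod>i\<in>I. ennreal (g (f i)))) (Pi\<^sub>E I A)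
        = (\<integral>\<^sup>+ f. (\<Prod>i\<in>I. ennreal (g (f i))) * indicator (Pi\<^sub>E I A) f \<partial>(\<Pi>\<^sub>M i\<in>I. lborel))"
      using A assms(1) by (intro emeasure_density) (auto intro: sets_PiM_I_finite)
    also have "\<dots> = (\<integral>\<^sup>+ f. (\<Prod>i\<in>I. ennreal (g (f i)) * indicator (A i) (f i)) \<partial>(\<Pi>\<^sub>M i\<in>I. lborel))"
    proof (intro nn_integral_cong)
      fix f assume "f \<in> space (\<Pi>\<^sub>M i\<in>I. (lborel :: real measure))"
      then have "indicator (Pi\<^sub>E I A) f = (\<Prod>i\<in>I. indicator (A i) (f i) :: ennreal)"
        using assms(1) by (intro indicator_PiE_eq_prod) (simp_all add: space_PiM PiE_def)
      then show "(\<Prod>i\<in>I. ennreal (g (f i))) * indicator (Pi\<^sub>E I A) f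
          = (\<Prod>i\<in>I. ennreal (g (f i)) * indicator (A i) (f i))"
        by (simp add: prod.distrib)
    qed
    also have "\<dots> = (\<Prod>i\<in>I. \<integral>\<^sup>+ x. ennreal (g x) * indicator (A i) x \<partial>lborel)"
      using A assms(1)
      by (intro L.product_nn_integral_prod[where f="\<lambda>i x. ennreal (g x) * indicator (A i) x"]) auto
    also have "\<dots> = (\<Prod>i\<in>I. emeasure (density lborel g) (A i))"
      by (rule prod.cong[OF refl]) (use A in \<open>simp add: emeasure_density\<close>)
    finally show "emeasure (density (\<Pi>\<^sub>M i\<in>I. lborel) (\<lambda>f. \<Prod>i\<in>I. ennreal (g (f i)))) (Pi\<^sub>E I A)
        = (\<Prod>i\<in>I. emeasure (density lborel g) (A i))" .
  qed (use assms(1) in simp)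
qed

lemma gaussian_measure_eq_distr_PiM:
  assumes "0 < \<sigma>"
  shows "gaussian_measure \<sigma> = distr (\<Pi>\<^sub>M b\<in>Basis. density lborel (normal_density 0 \<sigma>)) borel
           (\<lambda>f. \<Sum>b\<in>Basis. f b *\<^sub>R (b :: 'a::euclidean_space))"
proof -
  let ?emb = "\<lambda>f. \<Sum>b\<in>Basis. f b *\<^sub>R (b :: 'a)"
  have emb_inner: "?emb f \<bullet> b = f b" if "b \<in> Basis" for f b
    using that by (simp add: inner_sum_left inner_Basis if_distrib cong: if_cong)
  have "gaussian_measure \<sigma> = density (distr (\<Pi>\<^sub>M b\<in>Basis. lborel) borel ?emb) (gaussian_density \<sigma>)"
    unfolding gaussian_measure_def by (subst lborel_eq) simp
  also have "\<dots> = distr (density (\<Pi>\<^sub>M b\<in>Basis. lborel) (\<lambda>f. gaussian_density \<sigma> (?emb f))) borel ?emb"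
    by (rule density_distr) measurable
  also have "density (\<Pi>\<^sub>M b\<in>Basis. lborel) (\<lambda>f. gaussian_density \<sigma> (?emb f))
      = density (\<Pi>\<^sub>M b\<in>Basis. lborel) (\<lambda>f. \<Prod>b\<in>Basis. ennreal (normal_density 0 \<sigma> (f b)))"
    by (intro density_cong) (auto simp: gaussian_density_def emb_inner prod_ennreal)
  also have "\<dots> = (\<Pi>\<^sub>M b\<in>Basis. density lborel (normal_density 0 \<sigma>))"
    by (rule density_PiM_lborel_prod) (simp_all add: prob_space_normal_density[OF assms])
  finally show ?thesis .
qed

lemma prob_space_gaussian_measure:
  assumes "0 < \<sigma>"
  shows "prob_space (gaussian_measure \<sigma> :: 'a::euclidean_space measure)"
proof -
  have "prob_space (\<Pi>\<^sub>M b\<in>(Basis :: 'a set). density lborel (normal_density 0 \<sigma>))"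
    by (rule prob_space_PiM) (simp add: prob_space_normal_density[OF assms])
  then show ?thesis
    unfolding gaussian_measure_eq_distr_PiM[OF assms]
    by (rule prob_space.prob_space_distr) measurable
qed

lemma indep_vars_PiM_coordinates:
  assumes "finite I" "I \<noteq> {}" "\<And>i. i \<in> I \<Longrightarrow> prob_space (M i)"
  shows "prob_space.indep_vars (\<Pi>\<^sub>M i\<in>I. M i) M (\<lambda>i \<omega>. \<omega> i) I"
proof -
  interpret prob_space "\<Pi>\<^sub>M i\<in>I. M i"
    using assms(3) by (rule prob_space_PiM)
  have "distr (\<Pi>\<^sub>M i\<in>I. M i) (\<Pi>\<^sub>M i\<in>I. M i) (\<lambda>\<omega>. \<lambda>i\<in>I. \<omega> i)
      = distr (\<Pi>\<^sub>M i\<in>I. M i) (\<Pi>\<^sub>M i\<in>I. M i) (\<lambda>\<omega>. \<omega>)"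
    by (rule distr_cong) (auto simp: space_PiM PiE_def extensional_restrict)
  also have "\<dots> = (\<Pi>\<^sub>M i\<in>I. distr (\<Pi>\<^sub>M i\<in>I. M i) (M i) (\<lambda>\<omega>. \<omega> i))"
    using assms(3) by (simp add: distr_id2 distr_PiM_component cong: PiM_cong)
  finally show ?thesis
    by (subst indep_vars_iff_distr_eq_PiM') (use assms(2) in auto)
qed

lemma distributed_PiM_normal_sum:
  fixes I :: "'i set" and c :: "'i \<Rightarrow> real"
  assumes "finite I" "0 < \<sigma>" "\<exists>i\<in>I. c i \<noteq> 0"
  shows "distributed (\<Pi>\<^sub>M i\<in>I. density lborel (normal_density 0 \<sigma>)) lborel
           (\<lambda>\<omega>. \<Sum>i\<in>I. c i * \<omega> i) (normal_density 0 (\<sigma> * sqrt (\<Sum>i\<in>I. (c i)\<^sup>2)))"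
proof -
  define N where "N = density lborel (\<lambda>x. ennreal (normal_density 0 \<sigma> x))"
  define M where "M = (\<Pi>\<^sub>M i\<in>I. N)"
  define J where "J = {i\<in>I. c i \<noteq> 0}"
  have N: "prob_space N"
    unfolding N_def by (rule prob_space_normal_density[OF assms(2)])
  interpret prob_space M
    unfolding M_def using N by (rule prob_space_PiM)
  have J: "finite J" "J \<noteq> {}" "J \<subseteq> I"
    using assms(1,3) by (auto simp: J_def)
  have indep: "indep_vars (\<lambda>_. borel) (\<lambda>i \<omega>. c i * \<omega> i) J"
  proof (rule indep_vars_compose2[where X="\<lambda>i \<omega>. \<omega> i" and M'="\<lambda>_. N"])
    show "indep_vars (\<lambda>_. N) (\<lambda>i \<omega>. \<omega> i) J"
      using indep_vars_PiM_coordinates[of I "\<lambda>_. N"] N assms(1) J(2,3)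
      by (intro indep_vars_subset[OF _ J(3)]) (auto simp: M_def)
  qed (simp add: N_def)
  have coordinate: "distributed M lborel (\<lambda>\<omega>. \<omega> i) (normal_density 0 \<sigma>)" if "i \<in> I" for i
  proof -
    have "distr M lborel (\<lambda>\<omega>. \<omega> i) = distr M N (\<lambda>\<omega>. \<omega> i)"
      by (rule distr_cong) (auto simp: N_def)
    also have "\<dots> = N"
      unfolding M_def using N that by (intro distr_PiM_component) auto
    finally show ?thesis
      unfolding distributed_def N_def M_def using that by simp
  qed
  have "distributed M lborel (\<lambda>\<omega>. \<Sum>i\<in>J. c i * \<omega> i)
      (normal_density (\<Sum>i\<in>J. 0) (sqrt (\<Sum>i\<in>J. (\<bar>c i\<bar> * \<sigma>)\<^sup>2)))"
  proof (rule sum_indep_normal[OF J(1,2) indep])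
    fix i assume "i \<in> J"
    then show "0 < \<bar>c i\<bar> * \<sigma>"
      using assms(2) by (simp add: J_def)
    show "distributed M lborel (\<lambda>\<omega>. c i * \<omega> i) (normal_density 0 (\<bar>c i\<bar> * \<sigma>))"
      using normal_density_affine[OF coordinate[of i] assms(2), of "c i" 0] \<open>i \<in> J\<close>
      by (simp add: J_def)
  qed
  moreover have "(\<Sum>i\<in>J. c i * \<omega> i) = (\<Sum>i\<in>I. c i * \<omega> i)" for \<omega>
    unfolding J_def by (rule sum.mono_neutral_cong_left) (use assms(1) in auto)
  moreover have "sqrt (\<Sum>i\<in>J. (\<bar>c i\<bar> * \<sigma>)\<^sup>2) = \<sigma> * sqrt (\<Sum>i\<in>I. (c i)\<^sup>2)"
  proof -
    have "(\<Sum>i\<in>J. (\<bar>c i\<bar> * \<sigma>)\<^sup>2) = \<sigma>\<^sup>2 * (\<Sum>i\<in>I. (c i)\<^sup>2)"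
      unfolding sum_distrib_left J_def
      by (rule sum.mono_neutral_cong_left) (use assms(1) in \<open>auto simp: power_mult_distrib\<close>)
    then show ?thesis
      using assms(2) by (simp add: real_sqrt_mult)
  qed
  ultimately show ?thesis
    by (simp add: M_def N_def)
qed

lemma distributed_gaussian_inner:
  fixes w :: "'a::euclidean_space"
  assumes "0 < \<sigma>" "w \<noteq> 0"
  shows "distributed (gaussian_measure \<sigma>) lborel (\<lambda>e. e \<bullet> w) (normal_density 0 (\<sigma> * norm w))"
proof -
  define M where "M = (\<Pi>\<^sub>M b\<in>(Basis :: 'a set). density lborel (normal_density 0 \<sigma>))"
  have sets_M: "sets M = sets (\<Pi>\<^sub>M b\<in>(Basis :: 'a set). borel)"
    unfolding M_def by (rule sets_PiM_cong) auto
  have "distributed M lborel (\<lambda>\<omega>. \<Sum>b\<in>Basis. (w \<bullet> b) * \<omega> b) (normal_density 0 (\<sigma> * sqrt (\<Sum>b\<in>Basis. (w \<bullet> b)\<^sup>2)))"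
    unfolding M_def using assms euclidean_all_zero_iff[of w]
    by (intro distributed_PiM_normal_sum) auto
  moreover have "sqrt (\<Sum>b\<in>Basis. (w \<bullet> b)\<^sup>2) = norm w"
    by (simp add: norm_eq_sqrt_inner euclidean_inner[of w w] power2_eq_square)
  moreover have "(\<Sum>b\<in>Basis. \<omega> b *\<^sub>R b) \<bullet> w = (\<Sum>b\<in>Basis. (w \<bullet> b) * \<omega> b)" for \<omega>
    unfolding inner_sum_left by (simp add: inner_commute mult.commute)
  moreover have "(\<lambda>\<omega>. \<Sum>b\<in>Basis. \<omega> b *\<^sub>R b) \<in> measurable M (borel :: 'a measure)"
    by (simp add: measurable_cong_sets[OF sets_M refl])
  ultimately show ?thesis
    unfolding gaussian_measure_eq_distr_PiM[OF assms(1)] M_def[symmetric]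
    by (auto simp: distributed_def distr_distr measurable_distr_eq1 comp_def)
qed

definition gaussian_shift_ratio :: "real \<Rightarrow> 'a::euclidean_space \<Rightarrow> 'a \<Rightarrow> real" where
  "gaussian_shift_ratio \<sigma> w e = exp ((e \<bullet> w) / \<sigma>\<^sup>2 - (norm w)\<^sup>2 / (2 * \<sigma>\<^sup>2))"

lemma borel_measurable_gaussian_shift_ratio[measurable]:
  "gaussian_shift_ratio \<sigma> w \<in> borel_measurable borel"
  unfolding gaussian_shift_ratio_def by measurable

lemma gaussian_density_diff:
  assumes "0 < \<sigma>"
  shows "gaussian_density \<sigma> (u - w) = gaussian_density \<sigma> u * gaussian_shift_ratio \<sigma> w u"
proof -
  have normal: "normal_density 0 \<sigma> (x - y) = normal_density 0 \<sigma> x * exp (x * y / \<sigma>\<^sup>2 - y\<^sup>2 / (2 * \<sigma>\<^sup>2))"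
    for x y
  proof -
    have "-(x - y)\<^sup>2 / (2 * \<sigma>\<^sup>2) = -x\<^sup>2 / (2 * \<sigma>\<^sup>2) + (x * y / \<sigma>\<^sup>2 - y\<^sup>2 / (2 * \<sigma>\<^sup>2))"
      using assms by (simp add: field_simps power2_eq_square)
    then have "exp (-(x - y)\<^sup>2 / (2 * \<sigma>\<^sup>2))
        = exp (-x\<^sup>2 / (2 * \<sigma>\<^sup>2)) * exp (x * y / \<sigma>\<^sup>2 - y\<^sup>2 / (2 * \<sigma>\<^sup>2))"
      by (simp only: exp_add)
    then show ?thesis
      unfolding normal_density_def by simp
  qed
  have "(\<Sum>b\<in>Basis. (u \<bullet> b) * (w \<bullet> b) / \<sigma>\<^sup>2 - (w \<bullet> b)\<^sup>2 / (2 * \<sigma>\<^sup>2))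
      = (u \<bullet> w) / \<sigma>\<^sup>2 - (norm w)\<^sup>2 / (2 * \<sigma>\<^sup>2)"
    by (simp add: sum_subtractf sum_divide_distrib[symmetric] euclidean_inner[symmetric]
        power2_eq_square power2_norm_eq_inner[symmetric])
  moreover have "gaussian_density \<sigma> (u - w)
      = gaussian_density \<sigma> u * exp (\<Sum>b\<in>Basis. (u \<bullet> b) * (w \<bullet> b) / \<sigma>\<^sup>2 - (w \<bullet> b)\<^sup>2 / (2 * \<sigma>\<^sup>2))"
    unfolding gaussian_density_def by (simp add: inner_diff_left normal prod.distrib exp_sum)
  ultimately show ?thesis
    by (simp add: gaussian_shift_ratio_def)
qed

lemma nn_integral_gaussian_shift:
  assumes "0 < \<sigma>" and [measurable]: "h \<in> borel_measurable borel"
  shows "(\<integral>\<^sup>+ e. h (e + w) \<partial>gaussian_measure \<sigma>)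
       = (\<integral>\<^sup>+ e. h e * ennreal (gaussian_shift_ratio \<sigma> w e) \<partial>gaussian_measure \<sigma>)"
proof -
  have "(\<integral>\<^sup>+ e. h (e + w) \<partial>gaussian_measure \<sigma>)
      = (\<integral>\<^sup>+ e. ennreal (gaussian_density \<sigma> ((w + e) - w)) * h (w + e) \<partial>lborel)"
    unfolding gaussian_measure_def by (subst nn_integral_density) (auto simp: add.commute)
  also have "\<dots> = (\<integral>\<^sup>+ u. ennreal (gaussian_density \<sigma> (u - w)) * h u \<partial>lborel)"
    by (subst lborel_distr_plus[symmetric, of w]) (simp add: nn_integral_distr)
  also have "\<dots> = (\<integral>\<^sup>+ u. ennreal (gaussian_density \<sigma> u) * (h u * ennreal (gaussian_shift_ratio \<sigma> w u)) \<partial>lborel)"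
    by (intro nn_integral_cong)
       (simp add: gaussian_density_diff[OF assms(1)] ennreal_mult' gaussian_density_nonneg mult_ac)
  also have "\<dots> = (\<integral>\<^sup>+ e. h e * ennreal (gaussian_shift_ratio \<sigma> w e) \<partial>gaussian_measure \<sigma>)"
    unfolding gaussian_measure_def by (subst nn_integral_density) auto
  finally show ?thesis .
qed

lemma integrable_gaussian_shift_ratio:
  assumes "0 < \<sigma>"
  shows "integrable (gaussian_measure \<sigma>) (gaussian_shift_ratio \<sigma> w)"
proof -
  interpret prob_space "gaussian_measure \<sigma> :: 'a measure"
    by (rule prob_space_gaussian_measure[OF assms])
  have "(\<integral>\<^sup>+ e. ennreal (gaussian_shift_ratio \<sigma> w e) \<partial>gaussian_measure \<sigma>) = 1"
    using nn_integral_gaussian_shift[OF assms, of "\<lambda>_. 1" w] emeasure_space_1 by simp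
  then show ?thesis
    by (intro integrableI_nn_integral_finite[where x=1]) (auto simp: gaussian_shift_ratio_def)
qed

lemma integral_gaussian_shift:
  assumes "0 < \<sigma>" and [measurable]: "f \<in> borel_measurable borel"
    and f: "\<And>x. 0 \<le> f x \<and> f x \<le> 1"
  shows "(\<integral>e. f (e + w) \<partial>gaussian_measure \<sigma>)
       = (\<integral>e. f e * gaussian_shift_ratio \<sigma> w e \<partial>(gaussian_measure \<sigma> :: 'a::euclidean_space measure))"
proof -
  interpret prob_space "gaussian_measure \<sigma> :: 'a measure"
    by (rule prob_space_gaussian_measure[OF assms(1)])
  have ratio_pos: "0 < gaussian_shift_ratio \<sigma> w e" for e
    by (simp add: gaussian_shift_ratio_def)
  have "integrable (gaussian_measure \<sigma>) (\<lambda>e. f (e + w))"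
    using f by (intro integrable_const_bound[where B=1]) auto
  moreover have "integrable (gaussian_measure \<sigma>) (\<lambda>e. f e * gaussian_shift_ratio \<sigma> w e)"
    using f ratio_pos
    by (intro Bochner_Integration.integrable_bound[OF integrable_gaussian_shift_ratio[OF assms(1), of w]])
       (auto simp: abs_mult intro!: AE_I2 mult_left_le_one_le)
  moreover have "(\<integral>\<^sup>+ e. ennreal (f (e + w)) \<partial>gaussian_measure \<sigma>)
      = (\<integral>\<^sup>+ e. ennreal (f e * gaussian_shift_ratio \<sigma> w e) \<partial>gaussian_measure \<sigma>)"
    using f ratio_pos nn_integral_gaussian_shift[OF assms(1), of "\<lambda>x. ennreal (f x)" w]
    by (simp add: ennreal_mult' less_imp_le)
  moreover have nonneg: "0 \<le> f (e + w)" "0 \<le> f e * gaussian_shift_ratio \<sigma> w e" for e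
    using f ratio_pos by (simp_all add: less_imp_le)
  ultimately have "ennreal (\<integral>e. f (e + w) \<partial>gaussian_measure \<sigma>)
      = ennreal (\<integral>e. f e * gaussian_shift_ratio \<sigma> w e \<partial>gaussian_measure \<sigma>)"
    by (simp add: nn_integral_eq_integral)
  then show ?thesis
    by (simp add: nonneg integral_nonneg)
qed

section \<open>The standard normal distribution function\<close>

lemma Phi_eq_cdf: "Phi = cdf std_normal_distribution"
  unfolding Phi_def cdf_def by simp

lemma isCont_Phi: "isCont Phi t"
proof -
  interpret real_distribution std_normal_distribution
    by (rule real_dist_normal_dist)
  have "emeasure std_normal_distribution {t} = 0"
    using AE_lborel_singleton[of t]
    by (subst emeasure_density) (auto intro!: nn_integral_0_iff_AE[THEN iffD2] split: split_indicator)
  then show ?thesis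
    unfolding Phi_eq_cdf isCont_cdf by (simp add: measure_def)
qed

lemma strict_mono_Phi: "strict_mono Phi"
proof
  fix a b :: real assume "a < b"
  interpret real_distribution std_normal_distribution
    by (rule real_dist_normal_dist)
  define c where "c = std_normal_density (max \<bar>a\<bar> \<bar>b\<bar>)"
  have "0 < c" unfolding c_def by (simp add: normal_density_pos)
  have c_le: "c \<le> std_normal_density t" if "t \<in> {a<..b}" for t
  proof -
    have "t\<^sup>2 \<le> (max \<bar>a\<bar> \<bar>b\<bar>)\<^sup>2"
      using that by (intro power2_le_iff_abs_le[THEN iffD2]) auto
    then show ?thesis
      unfolding c_def std_normal_density_def by (simp add: divide_right_mono)
  qed
  have "ennreal (c * (b - a)) = (\<integral>\<^sup>+ t. ennreal c * indicator {a<..b} t \<partial>lborel)"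
    using \<open>a < b\<close> \<open>0 < c\<close> by (simp add: nn_integral_cmult_indicator ennreal_mult)
  also have "\<dots> \<le> (\<integral>\<^sup>+ t. ennreal (std_normal_density t) * indicator {a<..b} t \<partial>lborel)"
    by (intro nn_integral_mono) (auto simp: c_le split: split_indicator)
  also have "\<dots> = emeasure std_normal_distribution {a<..b}"
    by (subst emeasure_density) auto
  finally have "c * (b - a) \<le> measure std_normal_distribution {a<..b}"
    by (simp add: emeasure_eq_measure)
  moreover have "0 < c * (b - a)"
    using \<open>a < b\<close> \<open>0 < c\<close> by simp
  ultimately have "0 < measure std_normal_distribution {a<..b}"
    by linarith
  then show "Phi a < Phi b"
    unfolding Phi_eq_cdf using cdf_diff_eq[OF \<open>a < b\<close>] by simp
qed

lemma Phi_Phi_inv: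
  assumes "0 < p" "p < 1"
  shows "Phi (Phi_inv p) = p"
proof -
  interpret real_distribution std_normal_distribution
    by (rule real_dist_normal_dist)
  obtain u where "p < Phi u"
    using order_tendstoD(1)[OF cdf_lim_at_top_prob assms(2)]
    by (auto simp: Phi_eq_cdf eventually_at_top_linorder)
  moreover obtain l where "Phi l < p"
    using order_tendstoD(2)[OF cdf_lim_at_bot assms(1)]
    by (auto simp: Phi_eq_cdf eventually_at_bot_linorder)
  moreover have "l \<le> u"
    using calculation strict_mono_less_eq[OF strict_mono_Phi, of u l] by linarith
  ultimately obtain t where t: "Phi t = p"
    using IVT[of Phi l p u] isCont_Phi by (auto intro: less_imp_le)
  then have "(THE t. Phi t = p) = t"
    using strict_mono_eq[OF strict_mono_Phi] by blast
  with t show ?thesis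
    unfolding Phi_inv_def by simp
qed

lemma measure_le_eq_Phi:
  assumes "distributed M lborel Z std_normal_density"
  shows "measure M {x\<in>space M. Z x \<le> t} = Phi t"
proof -
  have [measurable]: "Z \<in> borel_measurable M"
    using distributed_measurable[OF assms] by simp
  have "measure M {x\<in>space M. Z x \<le> t} = measure (distr M lborel Z) {..t}"
    by (subst measure_distr) (auto intro!: arg_cong[where f="measure M"])
  then show ?thesis
    using assms by (simp add: distributed_def Phi_def)
qed

lemma measure_gaussian_halfspace:
  fixes w :: "'a::euclidean_space"
  assumes "0 < \<sigma>" "w \<noteq> 0"
  shows "measure (gaussian_measure \<sigma>) {e. e \<bullet> w \<le> t} = Phi (t / (\<sigma> * norm w))"
proof -
  interpret prob_space "gaussian_measure \<sigma> :: 'a measure"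
    by (rule prob_space_gaussian_measure[OF assms(1)])
  have pos: "0 < \<sigma> * norm w"
    using assms by simp
  have "distributed (gaussian_measure \<sigma>) lborel (\<lambda>e. (e \<bullet> w) / (\<sigma> * norm w)) std_normal_density"
    using distributed_gaussian_inner[OF assms] normal_standard_normal_convert[OF pos] by simp
  from measure_le_eq_Phi[OF this, of "t / (\<sigma> * norm w)"] pos
  show ?thesis by (simp add: divide_le_cancel)
qed

section \<open>Neyman--Pearson bounds under a Gaussian shift\<close>

lemma (in prob_space) neyman_pearson_integral_le:
  fixes f g r :: "'a \<Rightarrow> real"
  assumes [measurable]: "f \<in> borel_measurable M" "g \<in> borel_measurable M"
    and f: "\<And>x. 0 \<le> f x \<and> f x \<le> 1" and g: "\<And>x. 0 \<le> g x \<and> g x \<le> 1"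
    and r: "integrable M r" "0 \<le> c"
    and sign: "\<And>x. 0 \<le> (f x - g x) * (r x - c)"
    and le: "(\<integral>x. g x \<partial>M) \<le> (\<integral>x. f x \<partial>M)"
  shows "(\<integral>x. g x * r x \<partial>M) \<le> (\<integral>x. f x * r x \<partial>M)"
proof -
  have [measurable]: "r \<in> borel_measurable M"
    using r(1) by (rule borel_measurable_integrable)
  have bounded_integrable: "integrable M h" "integrable M (\<lambda>x. h x * r x)"
    if h: "\<And>x. 0 \<le> h x \<and> h x \<le> 1" and [measurable]: "h \<in> borel_measurable M" for h
  proof -
    show "integrable M h"
      by (rule integrable_const_bound[where B=1]) (use h in auto)
    show "integrable M (\<lambda>x. h x * r x)"
    proof (rule Bochner_Integration.integrable_bound[OF r(1)])
      show "AE x in M. norm (h x * r x) \<le> norm (r x)"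
        using h by (intro AE_I2) (simp add: abs_mult mult_left_le_one_le)
    qed measurable
  qed
  have "0 \<le> (\<integral>x. (f x - g x) * (r x - c) \<partial>M)"
    using sign by (intro integral_nonneg_AE AE_I2)
  also have "\<dots> = (\<integral>x. f x * r x \<partial>M) - (\<integral>x. g x * r x \<partial>M) - c * ((\<integral>x. f x \<partial>M) - (\<integral>x. g x \<partial>M))"
  proof -
    have "(\<lambda>x. (f x - g x) * (r x - c)) = (\<lambda>x. (f x * r x - g x * r x) - c * (f x - g x))"
      by (auto simp: algebra_simps)
    then show ?thesis
      using bounded_integrable[OF f assms(1)] bounded_integrable[OF g assms(2)]
      by (simp add: Bochner_Integration.integral_diff)
  qed
  finally show ?thesis
    using r(2) le by (smt (verit) mult_nonneg_nonneg)
qed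

lemma integral_gaussian_shift_le:
  fixes f g :: "'a::euclidean_space \<Rightarrow> real"
  assumes "0 < \<sigma>" and [measurable]: "f \<in> borel_measurable borel" "g \<in> borel_measurable borel"
    and f: "\<And>x. 0 \<le> f x \<and> f x \<le> 1" and g: "\<And>x. 0 \<le> g x \<and> g x \<le> 1"
    and sign: "\<And>e. 0 \<le> (f e - g e) * (e \<bullet> w - c)"
    and le: "(\<integral>e. g e \<partial>gaussian_measure \<sigma>) \<le> (\<integral>e. f e \<partial>gaussian_measure \<sigma>)"
  shows "(\<integral>e. g (e + w) \<partial>gaussian_measure \<sigma>) \<le> (\<integral>e. f (e + w) \<partial>gaussian_measure \<sigma>)"
proof -
  interpret prob_space "gaussian_measure \<sigma> :: 'a measure"
    by (rule prob_space_gaussian_measure[OF assms(1)])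
  define r where "r = gaussian_shift_ratio \<sigma> w"
  define r\<^sub>c where "r\<^sub>c = exp (c / \<sigma>\<^sup>2 - (norm w)\<^sup>2 / (2 * \<sigma>\<^sup>2))"
  have "0 \<le> (f e - g e) * (r e - r\<^sub>c)" for e
  proof -
    have "r e - r\<^sub>c \<le> 0 \<longleftrightarrow> e \<bullet> w - c \<le> 0" "0 \<le> r e - r\<^sub>c \<longleftrightarrow> 0 \<le> e \<bullet> w - c"
      using assms(1) by (simp_all add: r_def r\<^sub>c_def gaussian_shift_ratio_def divide_le_cancel)
    with sign[of e] show ?thesis
      unfolding zero_le_mult_iff by blast
  qed
  then have "(\<integral>e. g e * r e \<partial>gaussian_measure \<sigma>) \<le> (\<integral>e. f e * r e \<partial>gaussian_measure \<sigma>)"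
    using integrable_gaussian_shift_ratio[OF assms(1)] le
    by (intro neyman_pearson_integral_le[OF _ _ f g, where r=r and c=r\<^sub>c]) (auto simp: r_def r\<^sub>c_def)
  then show ?thesis
    using integral_gaussian_shift[OF assms(1), where f=f and w=w] f
      integral_gaussian_shift[OF assms(1), where f=g and w=w] g
    by (simp add: r_def)
qed

lemma integral_gaussian_halfspace_shift:
  fixes u w :: "'a::euclidean_space"
  assumes "0 < \<sigma>" "u \<noteq> 0"
  shows "(\<integral>e. indicator {e. e \<bullet> u \<le> t} (e + w) \<partial>gaussian_measure \<sigma>)
       = Phi ((t - w \<bullet> u) / (\<sigma> * norm u))"
proof -
  interpret prob_space "gaussian_measure \<sigma> :: 'a measure"
    by (rule prob_space_gaussian_measure[OF assms(1)])
  have "(\<lambda>e. indicator {e. e \<bullet> u \<le> t} (e + w) :: real) = indicator {e. e \<bullet> u \<le> t - w \<bullet> u}"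
    by (auto simp: inner_add_left split: split_indicator)
  moreover have "{e. e \<bullet> u \<le> t - w \<bullet> u} \<in> sets (gaussian_measure \<sigma>)"
    by measurable
  ultimately show ?thesis
    by (simp add: measure_gaussian_halfspace[OF assms])
qed

lemma integral_gaussian_shift_lower_bound:
  fixes f :: "'a::euclidean_space \<Rightarrow> real"
  assumes "0 < \<sigma>" and [measurable]: "f \<in> borel_measurable borel"
    and f: "\<And>x. 0 \<le> f x \<and> f x \<le> 1"
    and lower: "Phi a \<le> (\<integral>e. f e \<partial>gaussian_measure \<sigma>)"
  shows "Phi (a - norm w / \<sigma>) \<le> (\<integral>e. f (e + w) \<partial>gaussian_measure \<sigma>)"
proof (cases "w = 0")
  case True
  with lower show ?thesis by simp
next
  case False
  define c where "c = a * (\<sigma> * norm w)"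
  define g :: "'a \<Rightarrow> real" where "g = indicator {e. e \<bullet> w \<le> c}"
  have c_div: "c / (\<sigma> * norm w) = a"
    using assms(1) False by (simp add: c_def)
  have "(\<integral>e. g (e + w) \<partial>gaussian_measure \<sigma>) \<le> (\<integral>e. f (e + w) \<partial>gaussian_measure \<sigma>)"
  proof (rule integral_gaussian_shift_le[OF assms(1,2) _ f])
    show "0 \<le> (f e - g e) * (e \<bullet> w - c)" for e
      using f[of e] by (auto simp: g_def mult_nonpos_nonpos split: split_indicator)
    show "(\<integral>e. g e \<partial>gaussian_measure \<sigma>) \<le> (\<integral>e. f e \<partial>gaussian_measure \<sigma>)"
      using integral_gaussian_halfspace_shift[OF assms(1) False, of c 0] lower c_div
      by (simp add: g_def)
  qed (auto simp: g_def)
  moreover have "(c - w \<bullet> w) / (\<sigma> * norm w) = a - norm w / \<sigma>"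
    using assms(1) False by (simp add: c_def field_simps power2_eq_square flip: power2_norm_eq_inner)
  ultimately show ?thesis
    using integral_gaussian_halfspace_shift[OF assms(1) False, of c w] by (simp add: g_def)
qed

lemma integral_gaussian_shift_upper_bound:
  fixes f :: "'a::euclidean_space \<Rightarrow> real"
  assumes "0 < \<sigma>" and [measurable]: "f \<in> borel_measurable borel"
    and f: "\<And>x. 0 \<le> f x \<and> f x \<le> 1"
    and upper: "(\<integral>e. f e \<partial>gaussian_measure \<sigma>) \<le> Phi b"
  shows "(\<integral>e. f (e + w) \<partial>gaussian_measure \<sigma>) \<le> Phi (b + norm w / \<sigma>)"
proof (cases "w = 0")
  case True
  with upper show ?thesis by simp
next
  case False
  then have "- w \<noteq> 0" by simp
  define c where "c = b * (\<sigma> * norm w)"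
  define g :: "'a \<Rightarrow> real" where "g = indicator {e. e \<bullet> - w \<le> c}"
  have c_div: "c / (\<sigma> * norm w) = b"
    using assms(1) False by (simp add: c_def)
  have "(\<integral>e. f (e + w) \<partial>gaussian_measure \<sigma>) \<le> (\<integral>e. g (e + w) \<partial>gaussian_measure \<sigma>)"
  proof (rule integral_gaussian_shift_le[OF assms(1) _ assms(2) _ f])
    show "0 \<le> (g e - f e) * (e \<bullet> w - - c)" for e
      using f[of e] by (auto simp: g_def mult_nonneg_nonpos split: split_indicator)
    show "(\<integral>e. f e \<partial>gaussian_measure \<sigma>) \<le> (\<integral>e. g e \<partial>gaussian_measure \<sigma>)"
      using integral_gaussian_halfspace_shift[OF assms(1) \<open>- w \<noteq> 0\<close>, of c 0] upper c_div
      by (simp add: g_def)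
  qed (auto simp: g_def)
  moreover have "(c - w \<bullet> - w) / (\<sigma> * norm (- w)) = b + norm w / \<sigma>"
    using assms(1) False by (simp add: c_def field_simps power2_eq_square flip: power2_norm_eq_inner)
  ultimately show ?thesis
    using integral_gaussian_halfspace_shift[OF assms(1) \<open>- w \<noteq> 0\<close>, of c w] by (simp add: g_def)
qed

section \<open>Rotations as quaternion conjugation\<close>

text \<open>Quaternions are represented as pairs (scalar part, vector part).\<close>

definition quat_mult :: "real \<times> (real^3) \<Rightarrow> real \<times> (real^3) \<Rightarrow> real \<times> (real^3)" where
  "quat_mult p q = (fst p * fst q - snd p \<bullet> snd q,
                    fst p *\<^sub>R snd q + fst q *\<^sub>R snd p + cross3 (snd p) (snd q))"

definition quat_cnj :: "real \<times> (real^3) \<Rightarrow> real \<times> (real^3)" where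
  "quat_cnj q = (fst q, - snd q)"

definition rotation_quat :: "real \<Rightarrow> real^3 \<Rightarrow> real \<times> (real^3)" where
  "rotation_quat \<theta> k = (cos (\<theta> / 2), sin (\<theta> / 2) *\<^sub>R k)"

lemma power2_norm_vec3: "(norm (v :: real^3))\<^sup>2 = (v$1)\<^sup>2 + (v$2)\<^sup>2 + (v$3)\<^sup>2"
  unfolding power2_norm_eq_inner by (simp add: inner_vec_def sum_3 power2_eq_square)

lemma power2_norm_quat: "(norm (q :: real \<times> (real^3)))\<^sup>2 = (fst q)\<^sup>2 + (norm (snd q))\<^sup>2"
  by (cases q) (simp add: norm_Pair)

lemma norm_quat_mult: "norm (quat_mult p q) = norm p * norm q"
proof -
  obtain a u b v where pq: "p = (a, u)" "q = (b, v)"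
    by (cases p, cases q) auto
  have "(norm (quat_mult p q))\<^sup>2 = (norm p * norm q)\<^sup>2"
    unfolding pq power_mult_distrib power2_norm_quat quat_mult_def power2_norm_vec3
    by (simp add: cross3_def inner_vec_def sum_3 vector_def) algebra
  then show ?thesis
    by (simp add: power2_eq_iff_nonneg)
qed

lemma norm_quat_cnj: "norm (quat_cnj q) = norm q"
  by (cases q) (simp add: quat_cnj_def norm_Pair)

lemma quat_mult_diff_left: "quat_mult (p - q) r = quat_mult p r - quat_mult q r"
  by (simp add: quat_mult_def algebra_simps inner_diff_left cross3_simps)

lemma quat_mult_diff_right: "quat_mult p (q - r) = quat_mult p q - quat_mult p r"
  by (simp add: quat_mult_def algebra_simps inner_diff_right cross3_simps)

lemma quat_cnj_diff: "quat_cnj (p - q) = quat_cnj p - quat_cnj q"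
  by (simp add: quat_cnj_def)

lemma norm_rotation_quat: "norm k = 1 \<Longrightarrow> norm (rotation_quat \<theta> k) = 1"
  by (simp add: rotation_quat_def norm_Pair)

lemma Rot_mult_vec:
  "Rot k \<theta> *v p = cos \<theta> *\<^sub>R p + sin \<theta> *\<^sub>R cross3 k p + ((1 - cos \<theta>) * (k \<bullet> p)) *\<^sub>R k"
proof -
  have "linear (\<lambda>p. cos \<theta> *\<^sub>R p + sin \<theta> *\<^sub>R cross3 k p + ((1 - cos \<theta>) * (k \<bullet> p)) *\<^sub>R k)"
    by (rule linearI) (simp_all add: cross3_simps inner_add_right algebra_simps)
  then show ?thesis
    unfolding Rot_def by (simp add: matrix_works)
qed

lemma Rot_eq_quat_conjugation:
  assumes "norm k = 1"
  shows "Rot k \<theta> *v p = snd (quat_mult (quat_mult (rotation_quat \<theta> k) (0, p)) (quat_cnj (rotation_quat \<theta> k)))"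
proof -
  define t where "t = \<theta> / 2"
  have "\<theta> = 2 * t"
    by (simp add: t_def)
  then have "cos \<theta> = (cos t)\<^sup>2 - (sin t)\<^sup>2" "sin \<theta> = 2 * sin t * cos t"
    by (simp_all add: cos_double sin_double)
  moreover have "(k$1)\<^sup>2 + (k$2)\<^sup>2 + (k$3)\<^sup>2 = 1"
    using assms power2_norm_vec3[of k] by simp
  ultimately show ?thesis
    unfolding Rot_mult_vec rotation_quat_def quat_mult_def quat_cnj_def t_def[symmetric]
    by (simp add: vec_eq_iff forall_3 cross3_def inner_vec_def sum_3 vector_def)
      (insert sin_cos_squared_add[of t], (intro conjI; algebra))
qed

lemma norm_Rot_diff_le:
  assumes "norm k = 1" "norm k' = 1"
  shows "norm (Rot k \<theta> *v p - Rot k' \<theta>' *v p) \<le> 2 * norm (rotation_quat \<theta> k - rotation_quat \<theta>' k') * norm p"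
proof -
  define q where "q = rotation_quat \<theta> k"
  define q' where "q' = rotation_quat \<theta>' k'"
  have "Rot k \<theta> *v p - Rot k' \<theta>' *v p
      = snd (quat_mult (quat_mult (q - q') (0, p)) (quat_cnj q) + quat_mult (quat_mult q' (0, p)) (quat_cnj (q - q')))"
    unfolding Rot_eq_quat_conjugation[OF assms(1)] Rot_eq_quat_conjugation[OF assms(2)] q_def q'_def
    by (simp add: quat_mult_diff_left quat_mult_diff_right quat_cnj_diff)
  also have "norm \<dots> \<le> norm (quat_mult (quat_mult (q - q') (0, p)) (quat_cnj q) + quat_mult (quat_mult q' (0, p)) (quat_cnj (q - q')))"
    by (metis norm_snd_le prod.collapse)
  also have "\<dots> \<le> norm (quat_mult (quat_mult (q - q') (0, p)) (quat_cnj q)) + norm (quat_mult (quat_mult q' (0, p)) (quat_cnj (q - q')))"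
    by (rule norm_triangle_ineq)
  also have "\<dots> = 2 * norm (q - q') * norm p"
    by (simp add: norm_quat_mult norm_quat_cnj norm_rotation_quat assms q_def q'_def norm_Pair)
  finally show ?thesis
    by (simp add: q_def q'_def)
qed

lemma norm_phi_R_diff_le:
  assumes "norm k = 1" "norm k' = 1"
  shows "norm (phi_R x k \<theta> - phi_R x k' \<theta>') \<le> 2 * norm (rotation_quat \<theta> k - rotation_quat \<theta>' k') * norm x"
proof -
  define d where "d = 2 * norm (rotation_quat \<theta> k - rotation_quat \<theta>' k')"
  have "norm ((phi_R x k \<theta> - phi_R x k' \<theta>') $ i) \<le> d * norm (x $ i)" for i
    unfolding phi_R_def d_def using norm_Rot_diff_le[OF assms] by simp
  then have "(\<Sum>i\<in>UNIV. (norm ((phi_R x k \<theta> - phi_R x k' \<theta>') $ i))\<^sup>2) \<le> (\<Sum>i\<in>UNIV. (d * norm (x $ i))\<^sup>2)"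
    by (intro sum_mono power_mono) auto
  then have "(norm (phi_R x k \<theta> - phi_R x k' \<theta>'))\<^sup>2 \<le> (d * norm x)\<^sup>2"
    by (simp add: norm_vec_def L2_set_def sum_nonneg power_mult_distrib sum_distrib_left)
  then show ?thesis
    unfolding d_def[symmetric] by (rule power2_le_imp_le) (simp add: d_def)
qed

lemma one_minus_cos_le: "1 - cos x \<le> (x::real)\<^sup>2 / 2"
proof -
  have "(sin (x / 2))\<^sup>2 \<le> (x / 2)\<^sup>2"
    using power_mono[OF abs_sin_x_le_abs_x[of "x / 2"] abs_ge_zero, of 2] by (simp add: power_divide)
  then show ?thesis
    using cos_double_sin[of "x / 2"] by (simp add: power_divide)
qed

lemma power2_norm_rotation_quat_diff:
  assumes "norm k = 1" "norm k' = 1"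
  shows "(norm (rotation_quat \<theta> k - rotation_quat \<theta>' k'))\<^sup>2
       = 2 * (1 - cos ((\<theta> - \<theta>') / 2)) + 2 * (sin (\<theta> / 2) * sin (\<theta>' / 2)) * (1 - k \<bullet> k')"
proof -
  define s s' where "s = sin (\<theta> / 2)" and "s' = sin (\<theta>' / 2)"
  have "(norm (rotation_quat \<theta> k - rotation_quat \<theta>' k'))\<^sup>2
      = (cos (\<theta> / 2) - cos (\<theta>' / 2))\<^sup>2 + (s *\<^sub>R k - s' *\<^sub>R k') \<bullet> (s *\<^sub>R k - s' *\<^sub>R k')"
    by (simp add: rotation_quat_def power2_norm_quat power2_norm_eq_inner s_def s'_def)
  also have "(s *\<^sub>R k - s' *\<^sub>R k') \<bullet> (s *\<^sub>R k - s' *\<^sub>R k') = s\<^sup>2 + s'\<^sup>2 - 2 * s * s' * (k \<bullet> k')"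
    using assms power2_norm_eq_inner[of k] power2_norm_eq_inner[of k']
    by (simp add: inner_diff_left inner_diff_right inner_commute[of k' k] power2_eq_square algebra_simps)
  also have "(cos (\<theta> / 2) - cos (\<theta>' / 2))\<^sup>2 + (s\<^sup>2 + s'\<^sup>2 - 2 * s * s' * (k \<bullet> k'))
      = 2 * (1 - cos ((\<theta> - \<theta>') / 2)) + 2 * (s * s') * (1 - k \<bullet> k')"
    using cos_diff[of "\<theta> / 2" "\<theta>' / 2"] sin_cos_squared_add[of "\<theta> / 2"] sin_cos_squared_add[of "\<theta>' / 2"]
    by (simp add: s_def s'_def diff_divide_distrib power2_eq_square algebra_simps)
  finally show ?thesis
    by (simp add: s_def s'_def)
qed

lemma vangle_bounds:
  assumes "norm k = 1" "norm k' = 1"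
  shows "0 \<le> vangle k k'" "0 \<le> 1 - k \<bullet> k'" "1 - k \<bullet> k' \<le> (vangle k k')\<^sup>2 / 2"
proof -
  have "\<bar>k \<bullet> k'\<bar> \<le> 1"
    using Cauchy_Schwarz_ineq2[of k k'] assms by simp
  then show "0 \<le> vangle k k'" "0 \<le> 1 - k \<bullet> k'" "1 - k \<bullet> k' \<le> (vangle k k')\<^sup>2 / 2"
    using one_minus_cos_le[of "vangle k k'"] by (simp_all add: vangle_def arccos_lbound)
qed

lemma norm_rotation_quat_diff_le:
  assumes "norm k = 1" "norm k' = 1" "\<bar>\<theta>\<bar> \<le> R" "\<bar>\<theta>'\<bar> \<le> R"
    and "\<bar>\<theta> - \<theta>'\<bar> \<le> \<delta>" "vangle k k' \<le> \<eta>"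
  shows "(2 * norm (rotation_quat \<theta> k - rotation_quat \<theta>' k'))\<^sup>2 \<le> \<delta>\<^sup>2 + \<eta>\<^sup>2 * R\<^sup>2"
proof -
  define s s' where "s = sin (\<theta> / 2)" and "s' = sin (\<theta>' / 2)"
  have "1 - cos ((\<theta> - \<theta>') / 2) \<le> ((\<theta> - \<theta>') / 2)\<^sup>2 / 2"
    by (rule one_minus_cos_le)
  also have "\<dots> \<le> \<delta>\<^sup>2 / 8"
    using power_mono[OF assms(5) abs_ge_zero, of 2] by (simp add: power_divide)
  finally have angle: "1 - cos ((\<theta> - \<theta>') / 2) \<le> \<delta>\<^sup>2 / 8" .
  have "\<bar>s\<bar> \<le> R / 2" "\<bar>s'\<bar> \<le> R / 2"
    using abs_sin_x_le_abs_x[of "\<theta> / 2"] abs_sin_x_le_abs_x[of "\<theta>' / 2"] assms(3,4)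
    by (simp_all add: s_def s'_def)
  then have "s * s' \<le> R\<^sup>2 / 4"
    using mult_mono[of "\<bar>s\<bar>" "R / 2" "\<bar>s'\<bar>" "R / 2"] abs_ge_self[of "s * s'"]
    by (simp add: power2_eq_square abs_mult)
  moreover have "1 - k \<bullet> k' \<le> \<eta>\<^sup>2 / 2"
    using vangle_bounds[OF assms(1,2)] power_mono[OF assms(6), of 2]
    by simp
  ultimately have "s * s' * (1 - k \<bullet> k') \<le> R\<^sup>2 / 4 * (\<eta>\<^sup>2 / 2)"
    using vangle_bounds(2)[OF assms(1,2)] by (intro mult_mono) auto
  with angle show ?thesis
    unfolding power_mult_distrib power2_norm_rotation_quat_diff[OF assms(1,2)] s_def s'_def
    by (simp add: algebra_simps)
qed

lemma norm_phi_R_diff_le_spacing: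
  assumes "norm k = 1" "norm k' = 1" "\<bar>\<theta>\<bar> \<le> R" "\<bar>\<theta>'\<bar> \<le> R"
    and "\<bar>\<theta> - \<theta>'\<bar> \<le> \<delta>" "vangle k k' \<le> \<eta>"
  shows "norm (phi_R x k \<theta> - phi_R x k' \<theta>') \<le> sqrt (\<delta>\<^sup>2 + \<eta>\<^sup>2 * R\<^sup>2) * norm x"
proof -
  have "2 * norm (rotation_quat \<theta> k - rotation_quat \<theta>' k') \<le> sqrt (\<delta>\<^sup>2 + \<eta>\<^sup>2 * R\<^sup>2)"
    using norm_rotation_quat_diff_le[OF assms] by (rule real_le_rsqrt)
  with norm_phi_R_diff_le[OF assms(1,2)] show ?thesis
    by (meson mult_right_mono norm_ge_zero order_trans)
qed

lemma sqrt_add_le_pi_mult_sqrt: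
  assumes "0 \<le> a" "0 \<le> b"
  shows "sqrt (a + b) \<le> pi * sqrt (a / 4 + b / 8)"
proof -
  have "3 * 3 \<le> pi * pi"
    using pi_gt3 by (intro mult_mono) auto
  then have "8 * (a / 4 + b / 8) \<le> pi\<^sup>2 * (a / 4 + b / 8)"
    using assms by (intro mult_right_mono) (auto simp: power2_eq_square)
  then have "sqrt (a + b) \<le> sqrt (pi\<^sup>2 * (a / 4 + b / 8))"
    using assms by (intro real_sqrt_le_mono) simp
  then show ?thesis
    by (simp add: real_sqrt_mult)
qed

section \<open>Robustness of the smoothed classifier\<close>

lemma prod_Basis_vec:
  "(\<Prod>b\<in>(Basis :: ('a::euclidean_space^'n) set). F b) = (\<Prod>i\<in>UNIV. \<Prod>u\<in>Basis. F (axis i u))"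
proof -
  have "(Basis :: ('a^'n) set) = (\<Union>i. axis i ` Basis)"
    by (auto simp: Basis_vec_def)
  also have "prod F \<dots> = (\<Prod>i\<in>UNIV. prod F (axis i ` Basis))"
    by (rule prod.UNION_disjoint) (auto simp: axis_eq_axis)
  finally show ?thesis
    by (simp add: prod.reindex inj_on_def axis_eq_axis)
qed

lemma gauss_noise_eq_gaussian_measure: "gauss_noise \<sigma> = (gaussian_measure \<sigma> :: (real^3^'n) measure)"
proof -
  have "gaussian_density \<sigma> e = (\<Prod>i\<in>UNIV. \<Prod>c\<in>UNIV. normal_density 0 \<sigma> (e $ i $ c))" for e :: "real^3^'n"
    by (simp add: gaussian_density_def prod_Basis_vec inner_axis)
  then show ?thesis
    by (simp add: gauss_noise_def gaussian_measure_def)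
qed

lemma base_classifier_bounded:
  assumes "base_classifier C P"
  shows "0 \<le> P x y \<and> P x y \<le> 1"
proof (cases "y \<in> {1..C}")
  case True
  have "P x y \<le> (\<Sum>y\<in>{1..C}. P x y)"
    using assms True by (intro member_le_sum) (auto simp: base_classifier_def)
  with assms show ?thesis
    by (simp add: base_classifier_def)
next
  case False
  with assms show ?thesis
    by (simp add: base_classifier_def)
qed

lemma smoothed_certified_radius:
  assumes P: "base_classifier C P" and "0 < \<sigma>"
    and lower: "Phi a \<le> smoothed P \<sigma> x y\<^sub>A"
    and upper: "smoothed P \<sigma> x y \<le> Phi b"
    and close: "norm (x' - x) < \<sigma> / 2 * (a - b)"
  shows "smoothed P \<sigma> x' y < smoothed P \<sigma> x' y\<^sub>A"
proof -
  define w where "w = x' - x"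
  have "(\<lambda>z. P z y') \<in> borel_measurable borel" for y'
    using P by (simp add: base_classifier_def)
  then have [measurable]: "(\<lambda>e. P (x + e) y') \<in> borel_measurable borel" for y'
    by (rule measurable_compose[rotated]) simp
  have unshifted: "smoothed P \<sigma> x y' = (\<integral>e. P (x + e) y' \<partial>gaussian_measure \<sigma>)"
    and shifted: "smoothed P \<sigma> x' y' = (\<integral>e. P (x + (e + w)) y' \<partial>gaussian_measure \<sigma>)" for y'
    by (simp_all add: smoothed_def gauss_noise_eq_gaussian_measure w_def algebra_simps)
  have "smoothed P \<sigma> x' y \<le> Phi (b + norm w / \<sigma>)"
    using integral_gaussian_shift_upper_bound[OF \<open>0 < \<sigma>\<close>, where f="\<lambda>e. P (x + e) y" and b=b and w=w]
      base_classifier_bounded[OF P] upper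
    by (simp add: shifted unshifted)
  also have "\<dots> < Phi (a - norm w / \<sigma>)"
  proof (intro strict_monoD[OF strict_mono_Phi])
    have "2 * norm w / \<sigma> < a - b"
      using close \<open>0 < \<sigma>\<close> by (simp add: w_def pos_divide_less_eq mult.commute)
    then show "b + norm w / \<sigma> < a - norm w / \<sigma>"
      by (simp add: add_divide_distrib[symmetric])
  qed
  also have "\<dots> \<le> smoothed P \<sigma> x' y\<^sub>A"
    using integral_gaussian_shift_lower_bound[OF \<open>0 < \<sigma>\<close>, where f="\<lambda>e. P (x + e) y\<^sub>A" and a=a and w=w]
      base_classifier_bounded[OF P] lower
    by (simp add: shifted unshifted)
  finally show ?thesis .
qed

theorem mainTheorem3:
  fixes x :: "real^3^'n"
    and P :: "real^3^'n \<Rightarrow> nat \<Rightarrow> real"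
    and C M :: nat and yA :: nat
    and \<sigma> R \<eta> \<delta> :: real
    and kz :: "nat \<Rightarrow> real^3" and thz :: "nat \<Rightarrow> real"
    and pA pB :: "nat \<Rightarrow> real"
  assumes P: "base_classifier C P"
    and sigma: "\<sigma> > 0"
    and R: "0 < R" "R \<le> pi"
    and eta: "\<eta> \<ge> 0" and delta: "\<delta> \<ge> 0"
    and bound: "\<delta>\<^sup>2 / 4 + \<eta>\<^sup>2 * R\<^sup>2 / 8 \<le> 1"
    and grid: "\<forall>j\<in>{1..M}. kz j \<in> sphere 0 1 \<and> thz j \<in> {0..R}"
    and cover: "\<forall>k\<in>sphere 0 1. \<forall>\<theta>\<in>{0..R}. \<exists>j\<in>{1..M}.
                  vangle k (kz j) \<le> \<eta> \<and> \<bar>\<theta> - thz j\<bar> \<le> \<delta>"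
    and yA: "yA \<in> {1..C}"
    and probs: "\<forall>j\<in>{1..M}. pA j \<in> {0<..<1} \<and> pB j \<in> {0<..<1}"
    and pAj: "\<forall>j\<in>{1..M}. smoothed P \<sigma> (phi_R x (kz j) (thz j)) yA \<ge> pA j \<and> pA j > pB j"
    and pBj: "\<forall>j\<in>{1..M}. \<forall>y\<in>{1..C}. y \<noteq> yA \<longrightarrow>
                  smoothed P \<sigma> (phi_R x (kz j) (thz j)) y \<le> pB j"
    and margin: "\<forall>j\<in>{1..M}. \<sigma> / 2 * (Phi_inv (pA j) - Phi_inv (pB j))
                  > pi * sqrt (\<delta>\<^sup>2 / 4 + \<eta>\<^sup>2 * R\<^sup>2 / 8) * norm x"
  shows "\<forall>k\<in>sphere 0 1. \<forall>\<theta>\<in>{0..R}. \<forall>y\<in>{1..C}. y \<noteq> yA \<longrightarrow>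
           smoothed P \<sigma> (phi_R x k \<theta>) yA > smoothed P \<sigma> (phi_R x k \<theta>) y"
proof (intro ballI impI)
  fix k :: "real^3" and \<theta> :: real and y :: nat
  assume k: "k \<in> sphere 0 1" and \<theta>: "\<theta> \<in> {0..R}" and y: "y \<in> {1..C}" "y \<noteq> yA"
  obtain j where j: "j \<in> {1..M}" and "vangle k (kz j) \<le> \<eta>" "\<bar>\<theta> - thz j\<bar> \<le> \<delta>"
    using cover k \<theta> by blast
  then have "norm (phi_R x k \<theta> - phi_R x (kz j) (thz j)) \<le> sqrt (\<delta>\<^sup>2 + \<eta>\<^sup>2 * R\<^sup>2) * norm x"
    using grid k \<theta> by (intro norm_phi_R_diff_le_spacing) auto
  also have "\<dots> \<le> pi * sqrt (\<delta>\<^sup>2 / 4 + \<eta>\<^sup>2 * R\<^sup>2 / 8) * norm x"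
    using sqrt_add_le_pi_mult_sqrt[of "\<delta>\<^sup>2" "\<eta>\<^sup>2 * R\<^sup>2"] by (intro mult_right_mono) auto
  also have "\<dots> < \<sigma> / 2 * (Phi_inv (pA j) - Phi_inv (pB j))"
    using margin j by blast
  finally have close: "norm (phi_R x k \<theta> - phi_R x (kz j) (thz j)) < \<sigma> / 2 * (Phi_inv (pA j) - Phi_inv (pB j))" .
  have "Phi (Phi_inv (pA j)) \<le> smoothed P \<sigma> (phi_R x (kz j) (thz j)) yA"
    and "smoothed P \<sigma> (phi_R x (kz j) (thz j)) y \<le> Phi (Phi_inv (pB j))"
    using probs pAj pBj j y by (simp_all add: Phi_Phi_inv)
  from smoothed_certified_radius[OF P sigma this close]
  show "smoothed P \<sigma> (phi_R x k \<theta>) y < smoothed P \<sigma> (phi_R x k \<theta>) yA" .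
qed

end
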